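(* Consider the GNEP described below, and let $\bar x$ be a KKT point of the associated Feasibility GNEP. Assume that the GNEP satisfies GNEP-EMFCQ in $\bar x$ (with respect to the constraint functions $c^\nu=(g^\nu,h^\nu)$). Then $g^\nu(\bar x)\le 0$ for every $\nu$, i.e. $\bar x$ is feasible for the GNEP; in particular, $\bar x$ is a solution of the Feasibility GNEP.
   Context: GNEP: $N$ players, variables $x=(x^1,\ldots,x^N)\in\mathbb{R}^n$, $x^\nu\in\mathbb{R}^{n_\nu}$. Player $\nu$ solves $\min_{x^\nu}\theta_\nu(x)$ s.t. $g^\nu(x)\le0$, $h^\nu(x)\le0$, with continuously differentiable $\theta_\nu:\mathbb{R}^n\to\mathbb{R}$, $g^\nu:\mathbb{R}^n\to\mathbb{R}^{m_\nu}$, $h^\nu:\mathbb{R}^n\to\mathbb{R}^{p_\nu}$. Notation: $v_+=\max\{0,v\}$ componentwise, $\nabla_{x^\nu}$ the partial (transposed) Jacobian w.r.t. $x^\nu$, $\min$ componentwise. Feasibility GNEP: player $\nu$ solves $\min_{x^\nu}\|g^\nu_+(x)\|^2$ s.t. $h^\nu(x)\le0$. $\bar x$ is a KKT point of it if for every $\nu$ there is $w^\nu\in\mathbb{R}^{p_\nu}$ with $\nabla_{x^\nu}\|g^\nu_+(\bar x)\|^2+\nabla_{x^\nu}h^\nu(\bar x)w^\nu=0$ and $\min\{-h^\nu(\bar x),w^\nu\}=0$. A solution of the Feasibility GNEP is a point $\bar x$ with $h^\nu(\bar x)\le 0$ and, for each $\nu$, $\|g^\nu_+(\bar x)\|^2\le\|g^\nu_+(x^\nu,\bar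 x^{-\nu})\|^2$ for all $x^\nu$ with $h^\nu(x^\nu,\bar x^{-\nu})\le0$. GNEP-EMFCQ at $x$: for every $\nu$ there is $d^\nu\in\mathbb{R}^{n_\nu}$ such that $\nabla_{x^\nu}c_i^\nu(x)^Td^\nu<0$ for every component $c_i^\nu$ of $c^\nu=(g^\nu,h^\nu)$ with $c_i^\nu(x)\ge0$. *)

theory Defs
  imports "HOL-Analysis.Analysis"
begin

definition C1_on_UNIV :: "(real^'n \<Rightarrow> real) \<Rightarrow> bool" where
  "C1_on_UNIV f \<longleftrightarrow> (\<exists>f'. (\<forall>x. (f has_derivative blinfun_apply (f' x)) (at x)) \<and> continuous_on UNIV f')"

definition pder :: "(real^'n \<Rightarrow> real) \<Rightarrow> real^'n \<Rightarrow> 'n \<Rightarrow> real" where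
  "pder f x k = frechet_derivative f (at x) (axis k 1)"

definition sqviol :: "(nat \<Rightarrow> real^'n \<Rightarrow> real) \<Rightarrow> nat \<Rightarrow> real^'n \<Rightarrow> real" where
  "sqviol g m x = (\<Sum>i<m. (max 0 (g i x))\<^sup>2)"

text \<open>KKT point of the Feasibility GNEP. Players nu < N, block of player nu is blk nu
  (a set of coordinates), g nu i / h nu j are the components of g^nu / h^nu.\<close>
definition feas_KKT ::
  "nat \<Rightarrow> (nat \<Rightarrow> 'n set) \<Rightarrow> (nat \<Rightarrow> nat) \<Rightarrow> (nat \<Rightarrow> nat) \<Rightarrow>
   (nat \<Rightarrow> nat \<Rightarrow> real^'n \<Rightarrow> real) \<Rightarrow> (nat \<Rightarrow> nat \<Rightarrow> real^'n \<Rightarrow> real) \<Rightarrow> real^'n \<Rightarrow> bool" where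
  "feas_KKT N blk m p g h xb \<longleftrightarrow>
     (\<forall>\<nu><N. \<exists>w :: nat \<Rightarrow> real.
        (\<forall>k\<in>blk \<nu>. pder (sqviol (g \<nu>) (m \<nu>)) xb k + (\<Sum>j<p \<nu>. pder (h \<nu> j) xb k * w j) = 0)
      \<and> (\<forall>j<p \<nu>. min (- h \<nu> j xb) (w j) = 0))"

definition feas_solution ::
  "nat \<Rightarrow> (nat \<Rightarrow> 'n set) \<Rightarrow> (nat \<Rightarrow> nat) \<Rightarrow> (nat \<Rightarrow> nat) \<Rightarrow>
   (nat \<Rightarrow> nat \<Rightarrow> real^'n \<Rightarrow> real) \<Rightarrow> (nat \<Rightarrow> nat \<Rightarrow> real^'n \<Rightarrow> real) \<Rightarrow> real^'n \<Rightarrow> bool" where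
  "feas_solution N blk m p g h xb \<longleftrightarrow>
     (\<forall>\<nu><N. \<forall>j<p \<nu>. h \<nu> j xb \<le> 0)
   \<and> (\<forall>\<nu><N. \<forall>y :: real^'n. (\<forall>k. k \<notin> blk \<nu> \<longrightarrow> y $ k = xb $ k) \<longrightarrow> (\<forall>j<p \<nu>. h \<nu> j y \<le> 0)
          \<longrightarrow> sqviol (g \<nu>) (m \<nu>) xb \<le> sqviol (g \<nu>) (m \<nu>) y)"

text \<open>GNEP-EMFCQ at x w.r.t. c^nu = (g^nu, h^nu); directions d^nu in R^{n_nu} are
  vectors supported on the block of player nu.\<close>
definition GNEP_EMFCQ ::
  "nat \<Rightarrow> (nat \<Rightarrow> 'n set) \<Rightarrow> (nat \<Rightarrow> nat) \<Rightarrow> (nat \<Rightarrow> nat) \<Rightarrow>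
   (nat \<Rightarrow> nat \<Rightarrow> real^'n \<Rightarrow> real) \<Rightarrow> (nat \<Rightarrow> nat \<Rightarrow> real^'n \<Rightarrow> real) \<Rightarrow> real^'n \<Rightarrow> bool" where
  "GNEP_EMFCQ N blk m p g h x \<longleftrightarrow>
     (\<forall>\<nu><N. \<exists>d :: real^'n. (\<forall>k. k \<notin> blk \<nu> \<longrightarrow> d $ k = 0)
        \<and> (\<forall>i<m \<nu>. g \<nu> i x \<ge> 0 \<longrightarrow> (\<Sum>k\<in>blk \<nu>. pder (g \<nu> i) x k * d $ k) < 0)
        \<and> (\<forall>j<p \<nu>. h \<nu> j x \<ge> 0 \<longrightarrow> (\<Sum>k\<in>blk \<nu>. pder (h \<nu> j) x k * d $ k) < 0))"

end

theory Submission
  imports Defs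
begin

text \<open>At a KKT point of the feasibility problem of player \<open>\<nu>\<close>, the gradient
  \<open>\<Sum>\<^sub>i 2 max(0, g\<^sub>i) \<nabla>g\<^sub>i\<close> of the squared violation plus \<open>\<Sum>\<^sub>j w\<^sub>j \<nabla>h\<^sub>j\<close> vanishes
  in the block of \<open>\<nu>\<close>. Pairing this identity with the EMFCQ direction \<open>d\<close> gives a sum of
  nonpositive terms, and the term of a violated constraint \<open>g\<^sub>i > 0\<close> would be strictly
  negative. Hence no constraint is violated, the squared violation is \<open>0\<close>, its minimal
  value, and \<open>x\<close> solves the feasibility GNEP.\<close>

lemma has_real_derivative_max0_power2:
  "((\<lambda>t::real. (max 0 t)\<^sup>2) has_real_derivative 2 * max 0 t) (at t)"
proof -
  consider "t > 0" | "t < 0" | "t = 0" by linarith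
  then show ?thesis
  proof cases
    case 1
    have "((\<lambda>t::real. t\<^sup>2) has_real_derivative 2 * t) (at t)"
      by (auto intro!: derivative_eq_intros)
    from has_field_derivative_transform_within_open[OF this, of "{0<..}"] 1 show ?thesis
      by auto
  next
    case 2
    have "((\<lambda>t::real. 0) has_real_derivative 0) (at t)"
      by (rule DERIV_const)
    from has_field_derivative_transform_within_open[OF this, of "{..<0}"] 2 show ?thesis
      by auto
  next
    case 3
    have "((\<lambda>y::real. (max 0 y)\<^sup>2 / y) \<longlongrightarrow> 0) (at 0)"
    proof (rule Lim_null_comparison)
      show "\<forall>\<^sub>F y in at 0. norm ((max 0 y)\<^sup>2 / y) \<le> \<bar>y\<bar>"
      proof (intro always_eventually allI)
        fix y :: real
        show "norm ((max 0 y)\<^sup>2 / y) \<le> \<bar>y\<bar>"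
          by (cases "y > 0") (auto simp: power2_eq_square)
      qed
      show "((\<lambda>y::real. \<bar>y\<bar>) \<longlongrightarrow> 0) (at 0)"
        using tendsto_rabs[OF tendsto_ident_at[of 0 UNIV]] by simp
    qed
    with 3 show ?thesis
      by (simp add: has_field_derivative_iff)
  qed
qed

lemma C1_on_UNIV_imp_differentiable: "C1_on_UNIV f \<Longrightarrow> f differentiable (at x)"
  unfolding C1_on_UNIV_def differentiable_def by blast

lemma has_derivative_sqviol:
  assumes "\<And>i. i < m \<Longrightarrow> g i differentiable (at x)"
  shows "(sqviol g m has_derivative
           (\<lambda>v. \<Sum>i<m. 2 * max 0 (g i x) * frechet_derivative (g i) (at x) v)) (at x)"
proof -
  have "((\<lambda>x. (max 0 (g i x))\<^sup>2) has_derivative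
          (\<lambda>v. 2 * max 0 (g i x) * frechet_derivative (g i) (at x) v)) (at x)" if "i < m" for i
  proof -
    have "(g i has_derivative frechet_derivative (g i) (at x)) (at x)"
      using assms that frechet_derivative_works by blast
    moreover have "((\<lambda>t. (max 0 t)\<^sup>2) has_derivative (*) (2 * max 0 (g i x))) (at (g i x))"
      using has_real_derivative_max0_power2 has_field_derivative_def by blast
    ultimately show ?thesis
      using has_derivative_compose by fastforce
  qed
  then show ?thesis
    unfolding sqviol_def[abs_def] by (auto intro: has_derivative_sum)
qed

lemma pder_sqviol:
  assumes "\<And>i. i < m \<Longrightarrow> g i differentiable (at x)"
  shows "pder (sqviol g m) x k = (\<Sum>i<m. 2 * max 0 (g i x) * pder (g i) x k)"
proof -
  have "frechet_derivative (sqviol g m) (at x)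
          = (\<lambda>v. \<Sum>i<m. 2 * max 0 (g i x) * frechet_derivative (g i) (at x) v)"
    using frechet_derivative_at[OF has_derivative_sqviol[OF assms]] by simp
  then show ?thesis
    unfolding pder_def by simp
qed

lemma sqviol_nonneg: "0 \<le> sqviol g m x"
  unfolding sqviol_def by (simp add: sum_nonneg)

lemma sqviol_eq_0_if_feasible: "(\<And>i. i < m \<Longrightarrow> g i x \<le> 0) \<Longrightarrow> sqviol g m x = 0"
  unfolding sqviol_def by (simp add: max_absorb1)

lemma nonneg_combination_coeffs_zero_if_descent_direction:
  fixes a :: "'i \<Rightarrow> real" and G :: "'i \<Rightarrow> 'k \<Rightarrow> real"
    and w :: "'j \<Rightarrow> real" and H :: "'j \<Rightarrow> 'k \<Rightarrow> real" and d :: "'k \<Rightarrow> real"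
  assumes "finite I"
    and combination: "\<And>k. k \<in> K \<Longrightarrow> (\<Sum>i\<in>I. a i * G i k) + (\<Sum>j\<in>J. w j * H j k) = 0"
    and a_nonneg: "\<And>i. i \<in> I \<Longrightarrow> 0 \<le> a i"
    and w_nonneg: "\<And>j. j \<in> J \<Longrightarrow> 0 \<le> w j"
    and G_descent: "\<And>i. i \<in> I \<Longrightarrow> 0 < a i \<Longrightarrow> (\<Sum>k\<in>K. G i k * d k) < 0"
    and H_descent: "\<And>j. j \<in> J \<Longrightarrow> 0 < w j \<Longrightarrow> (\<Sum>k\<in>K. H j k * d k) < 0"
    and "i0 \<in> I"
  shows "a i0 = 0"
proof (rule ccontr)
  assume "a i0 \<noteq> 0"
  with a_nonneg \<open>i0 \<in> I\<close> have "0 < a i0" by (simp add: order_less_le)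
  have G_terms: "a i * (\<Sum>k\<in>K. G i k * d k) \<le> 0" if "i \<in> I" for i
    using a_nonneg[OF that] G_descent[OF that] by (cases "a i = 0") (auto simp: mult_nonneg_nonpos)
  have H_terms: "w j * (\<Sum>k\<in>K. H j k * d k) \<le> 0" if "j \<in> J" for j
    using w_nonneg[OF that] H_descent[OF that] by (cases "w j = 0") (auto simp: mult_nonneg_nonpos)
  have G_part: "(\<Sum>i\<in>I. a i * (\<Sum>k\<in>K. G i k * d k)) < 0"
  proof -
    have "(\<Sum>i\<in>I. a i * (\<Sum>k\<in>K. G i k * d k)) < (\<Sum>i\<in>I. 0)"
      using G_terms G_descent[OF \<open>i0 \<in> I\<close> \<open>0 < a i0\<close>] \<open>0 < a i0\<close> \<open>i0 \<in> I\<close>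
      by (intro sum_strict_mono_ex1) (auto intro!: bexI[of _ i0] simp: mult_pos_neg \<open>finite I\<close>)
    then show ?thesis by simp
  qed
  have H_part: "(\<Sum>j\<in>J. w j * (\<Sum>k\<in>K. H j k * d k)) \<le> 0"
    using H_terms by (rule sum_nonpos)
  have "0 = (\<Sum>k\<in>K. ((\<Sum>i\<in>I. a i * G i k) + (\<Sum>j\<in>J. w j * H j k)) * d k)"
    using combination by simp
  also have "\<dots> = (\<Sum>k\<in>K. (\<Sum>i\<in>I. a i * G i k) * d k) + (\<Sum>k\<in>K. (\<Sum>j\<in>J. w j * H j k) * d k)"
    by (simp add: sum.distrib distrib_right)
  also have "\<dots> = (\<Sum>i\<in>I. a i * (\<Sum>k\<in>K. G i k * d k)) + (\<Sum>j\<in>J. w j * (\<Sum>k\<in>K. H j k * d k))"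
    by (simp add: sum_distrib_left sum_distrib_right mult.assoc sum.swap[of _ I] sum.swap[of _ J])
  also have "\<dots> < 0"
    using G_part H_part by linarith
  finally show False by simp
qed

lemma min_eq_0_complementarity:
  "min (- a) b = (0::real) \<Longrightarrow> a \<le> 0 \<and> 0 \<le> b \<and> (0 < b \<longrightarrow> a = 0)"
  by (cases "- a \<le> b") (simp_all add: min_def)

lemma feas_KKT_imp_h_nonpos:
  assumes "feas_KKT N blk m p g h x" "\<nu> < N" "j < p \<nu>"
  shows "h \<nu> j x \<le> 0"
proof -
  from assms obtain w where "min (- h \<nu> j x) (w j) = 0"
    unfolding feas_KKT_def by blast
  then show ?thesis
    using min_eq_0_complementarity by blast
qed

lemma feas_KKT_EMFCQ_imp_g_nonpos:
  fixes x :: "real^'n"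
  assumes KKT: "feas_KKT N blk m p g h x" and EMFCQ: "GNEP_EMFCQ N blk m p g h x"
    and C1_g: "\<And>i. i < m \<nu> \<Longrightarrow> C1_on_UNIV (g \<nu> i)"
    and "\<nu> < N" "i0 < m \<nu>"
  shows "g \<nu> i0 x \<le> 0"
proof -
  obtain w where stationary:
      "\<forall>k\<in>blk \<nu>. pder (sqviol (g \<nu>) (m \<nu>)) x k + (\<Sum>j<p \<nu>. pder (h \<nu> j) x k * w j) = 0"
    and complementary: "\<forall>j<p \<nu>. min (- h \<nu> j x) (w j) = 0"
    using KKT \<open>\<nu> < N\<close> unfolding feas_KKT_def by blast
  obtain d :: "real^'n" where
      g_descent: "\<forall>i<m \<nu>. g \<nu> i x \<ge> 0 \<longrightarrow> (\<Sum>k\<in>blk \<nu>. pder (g \<nu> i) x k * d $ k) < 0"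
    and h_descent: "\<forall>j<p \<nu>. h \<nu> j x \<ge> 0 \<longrightarrow> (\<Sum>k\<in>blk \<nu>. pder (h \<nu> j) x k * d $ k) < 0"
    using EMFCQ \<open>\<nu> < N\<close> unfolding GNEP_EMFCQ_def by blast
  have pder_sqviol_g: "pder (sqviol (g \<nu>) (m \<nu>)) x k = (\<Sum>i<m \<nu>. 2 * max 0 (g \<nu> i x) * pder (g \<nu> i) x k)" for k
    by (rule pder_sqviol) (use C1_g C1_on_UNIV_imp_differentiable in blast)
  have "2 * max 0 (g \<nu> i0 x) = 0"
  proof (rule nonneg_combination_coeffs_zero_if_descent_direction
      [where I = "{..<m \<nu>}" and J = "{..<p \<nu>}" and K = "blk \<nu>" and w = w
        and d = "\<lambda>k. d $ k" and G = "\<lambda>i. pder (g \<nu> i) x" and H = "\<lambda>j. pder (h \<nu> j) x"])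
    show "(\<Sum>i<m \<nu>. 2 * max 0 (g \<nu> i x) * pder (g \<nu> i) x k)
          + (\<Sum>j<p \<nu>. w j * pder (h \<nu> j) x k) = 0" if "k \<in> blk \<nu>" for k
      using stationary that by (simp add: pder_sqviol_g mult.commute)
    show "0 \<le> w j" if "j \<in> {..<p \<nu>}" for j
      using min_eq_0_complementarity[of "h \<nu> j x" "w j"] complementary that by simp
    show "(\<Sum>k\<in>blk \<nu>. pder (h \<nu> j) x k * d $ k) < 0" if "j \<in> {..<p \<nu>}" "0 < w j" for j
      using min_eq_0_complementarity[of "h \<nu> j x" "w j"] complementary h_descent that by simp
    show "(\<Sum>k\<in>blk \<nu>. pder (g \<nu> i) x k * d $ k) < 0" if "i \<in> {..<m \<nu>}" "0 < 2 * max 0 (g \<nu> i x)" for i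
      using g_descent that by simp
    show "0 \<le> 2 * max 0 (g \<nu> i x)" for i
      by simp
  qed (use \<open>i0 < m \<nu>\<close> in simp_all)
  then show ?thesis by simp
qed

lemma feas_solution_if_feasible:
  assumes "\<And>\<nu> j. \<nu> < N \<Longrightarrow> j < p \<nu> \<Longrightarrow> h \<nu> j x \<le> 0"
    and "\<And>\<nu> i. \<nu> < N \<Longrightarrow> i < m \<nu> \<Longrightarrow> g \<nu> i x \<le> 0"
  shows "feas_solution N blk m p g h x"
  unfolding feas_solution_def using assms by (simp add: sqviol_eq_0_if_feasible sqviol_nonneg)

theorem theorem4p3:
  fixes N :: nat
    and blk :: "nat \<Rightarrow> 'n::finite set"
    and m p :: "nat \<Rightarrow> nat"
    and \<theta> :: "nat \<Rightarrow> real^'n \<Rightarrow> real"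
    and g h :: "nat \<Rightarrow> nat \<Rightarrow> real^'n \<Rightarrow> real"
    and xb :: "real^'n"
  assumes partition: "(\<Union>\<nu><N. blk \<nu>) = UNIV"
    and disjoint: "\<And>\<nu> \<mu>. \<nu> < N \<Longrightarrow> \<mu> < N \<Longrightarrow> \<nu> \<noteq> \<mu> \<Longrightarrow> blk \<nu> \<inter> blk \<mu> = {}"
    and C1_theta: "\<And>\<nu>. \<nu> < N \<Longrightarrow> C1_on_UNIV (\<theta> \<nu>)"
    and C1_g: "\<And>\<nu> i. \<nu> < N \<Longrightarrow> i < m \<nu> \<Longrightarrow> C1_on_UNIV (g \<nu> i)"
    and C1_h: "\<And>\<nu> j. \<nu> < N \<Longrightarrow> j < p \<nu> \<Longrightarrow> C1_on_UNIV (h \<nu> j)"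
    and KKT: "feas_KKT N blk m p g h xb"
    and EMFCQ: "GNEP_EMFCQ N blk m p g h xb"
  shows "(\<forall>\<nu><N. \<forall>i<m \<nu>. g \<nu> i xb \<le> 0) \<and> feas_solution N blk m p g h xb"
proof -
  have g_nonpos: "g \<nu> i xb \<le> 0" if "\<nu> < N" "i < m \<nu>" for \<nu> i
    using feas_KKT_EMFCQ_imp_g_nonpos[OF KKT EMFCQ C1_g] that by blast
  have "h \<nu> j xb \<le> 0" if "\<nu> < N" "j < p \<nu>" for \<nu> j
    using feas_KKT_imp_h_nonpos[OF KKT that] .
  with g_nonpos show ?thesis
    by (blast intro: feas_solution_if_feasible)
qed

end
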